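(* Let $\mathcal I$ be $\mathcal I_\omega$ or $\mathcal I_0$. For every set $\Gamma\subseteq\mathbb T(\Sigma)$ and every $t\in\mathbb T(\Sigma)$: $\Gamma\Vdash_{\mathcal I}t$ if and only if $\Gamma\vdash_{\mathcal I}t$.
   Context: Illative systems. Fix a finite set $\mathcal B$ of base types and a set $\Sigma$ of primitive constants containing $\Xi$, $L$ and $A_\tau$ for each $\tau\in\mathcal B$. $\mathbb T(\Sigma)$ is the set of type-free lambda-terms over $\Sigma$. Abbreviations: $I=\lambda x.x$, $K=\lambda xy.x$, $H=\lambda x.L(Kx)$, $\supset\;=\lambda xy.\Xi(Kx)(Ky)$ (infix, right-associative), $F=\lambda xyf.\Xi x(\lambda z.y(fz))$. Judgements are $\Gamma\vdash t$ with $\Gamma$ finite. $\mathcal I_\omega$ has axioms $\Gamma,t\vdash t$; $\Gamma\vdash LH$; $\Gamma\vdash LA_\tau$ ($\tau\in\mathcal B$); and rules: (Eq) from $\Gamma\vdash t_1$ and $t_1=_{\beta\eta}t_2$ infer $\Gamma\vdash t_2$; ($H_i$) from $\Gamma\vdash t$ infer $\Gamma\vdash Ht$; ($\Xi_e$) from $\Gamma\vdash\Xi t_1t_2$ and $\Gamma\vdash t_1t_3$ infer $\Gamma\vdash t_2t_3$; ($\Xi_i$) from $\Gamma,t_1x\vdash t_2x$ and $\Gamma\vdash Lt_1$ infer $\Gamma\vdash\Xi t_1t_2$; ($\Xi_H$) from $\Gamma,t_1x\vdash H(t_2x)$ and $\Gamma\vdash Lt_1$ infer $\Gamma\vdash H(\Xi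 t_1t_2)$; ($F_L$) from $\Gamma,t_1x\vdash Lt_2$ and $\Gamma\vdash Lt_1$ infer $\Gamma\vdash L(Ft_1t_2)$; in the last three $x\notin FV(\Gamma,t_1,t_2)$. $\mathcal I_0$ is $\mathcal I_\omega$ without $F_L$. For arbitrary $\Gamma$, $\Gamma\vdash_{\mathcal I}t$ means some finite $\Gamma'\subseteq\Gamma$ has $\Gamma'\vdash t$ derivable in $\mathcal I$. A combinatory algebra is $\langle C,\cdot,S,K\rangle$ with $SXYZ=XZ(YZ)$, $KXY=X$; extensional if $M_1X=M_2X$ for all $X$ implies $M_1=M_2$. An illative Kripke pre-model is $\langle\mathcal S,\le,\mathcal C,I,\varsigma\rangle$: $\le$ a partial order on states $\mathcal S$, $\mathcal C$ an extensional combinatory algebra, $I:\Sigma\to\mathcal C$, $\varsigma$ assigns to each element of $\mathcal C$ an upward-closed subset of $\mathcal S$. For a valuation $u$ (variables to $\mathcal C$): $[\![x]\!]_u=u(x)$, $[\![c]\!]_u=I(c)$, $[\![t_1t_2]\!]_u=[\![t_1]\!]_u\cdot[\![t_2]\!]_u$, $[\![\lambda x.t]\!]_u$ the unique $d$ with $d\cdot d'=[\![t]\!]_{u[x/d']}$ for all $d'$. An illative Kripke model for $\mathcal I_\omega$ is a pre-model such that for all $X,Y\in\mathcal C$, $s\in\mathcal S$ (writing $\Xi,L,H,F,A_\tau$ for their values): (1) if $s\in\varsigma(LX)$ and for all $s'\ge s$, $Z\in\mathcal C$ with $s'\in\varsigma(XZ)$ we have $s'\in\varsigma(YZ)$, then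 $s\in\varsigma(\Xi XY)$; (2) if $s\in\varsigma(\Xi XY)$ then for all $Z$ with $s\in\varsigma(XZ)$, $s\in\varsigma(YZ)$; (3) if $s\in\varsigma(LX)$ and for all $s'\ge s$, $Z$ with $s'\in\varsigma(XZ)$ we have $s'\in\varsigma(H(YZ))$, then $s\in\varsigma(H(\Xi XY))$; (4) if $s\in\varsigma(LX)$ and for all $s'\ge s$ such that $s'\in\varsigma(XZ)$ for some $Z$ we have $s'\in\varsigma(LY)$, then $s\in\varsigma(L(FXY))$; (5) $s\in\varsigma(X)$ implies $s\in\varsigma(HX)$; (6) $s\in\varsigma(LH)$; (7) $s\in\varsigma(LA_\tau)$ for $\tau\in\mathcal B$. For $\mathcal I_0$ omit (4). Write $s,u\Vdash_{\mathcal M}t$ iff $s\in\varsigma([\![t]\!]_u)$. $\Gamma\Vdash_{\mathcal I}t$ means: for every illative Kripke model $\mathcal M$ for $\mathcal I$, state $s$ and valuation $u$ with $s,u\Vdash_{\mathcal M}t'$ for all $t'\in\Gamma$, we have $s,u\Vdash_{\mathcal M}t$. *)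

theory Defs
  imports Main
begin

section \<open>Signature and type-free lambda terms (de Bruijn indices)\<close>

text \<open>Primitive constants: Xi, L, A_tau for each base type tau (base types = the
  finite type 'b), plus arbitrary further constants of type 'c.\<close>
datatype ('b, 'c) const = Xi | Lc | At 'b | Oth 'c

text \<open>Free variables are the indices not bound by an enclosing Lam.\<close>
datatype ('b, 'c) trm =
    Var nat
  | Cst "('b, 'c) const"
  | App "('b, 'c) trm" "('b, 'c) trm"
  | Lam "('b, 'c) trm"

fun lift :: "nat \<Rightarrow> ('b, 'c) trm \<Rightarrow> ('b, 'c) trm" where
  "lift k (Var i) = (if i < k then Var i else Var (Suc i))"
| "lift k (Cst c) = Cst c"
| "lift k (App s t) = App (lift k s) (lift k t)"
| "lift k (Lam t) = Lam (lift (Suc k) t)"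

fun subst :: "('b, 'c) trm \<Rightarrow> nat \<Rightarrow> ('b, 'c) trm \<Rightarrow> ('b, 'c) trm" where
  "subst (Var i) k s = (if i < k then Var i else if i = k then s else Var (i - 1))"
| "subst (Cst c) k s = Cst c"
| "subst (App t u) k s = App (subst t k s) (subst u k s)"
| "subst (Lam t) k s = Lam (subst t (Suc k) (lift 0 s))"

fun fv :: "('b, 'c) trm \<Rightarrow> nat set" where
  "fv (Var i) = {i}"
| "fv (Cst c) = {}"
| "fv (App s t) = fv s \<union> fv t"
| "fv (Lam t) = {n. Suc n \<in> fv t}"

definition fvs :: "('b, 'c) trm set \<Rightarrow> nat set" where
  "fvs \<Gamma> = (\<Union>t\<in>\<Gamma>. fv t)"

inductive beta_eta :: "('b, 'c) trm \<Rightarrow> ('b, 'c) trm \<Rightarrow> bool" where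
  beta: "beta_eta (App (Lam s) t) (subst s 0 t)"
| eta: "beta_eta (Lam (App (lift 0 s) (Var 0))) s"
| appL: "beta_eta s s' \<Longrightarrow> beta_eta (App s t) (App s' t)"
| appR: "beta_eta t t' \<Longrightarrow> beta_eta (App s t) (App s t')"
| lam: "beta_eta s s' \<Longrightarrow> beta_eta (Lam s) (Lam s')"

definition beq :: "('b, 'c) trm \<Rightarrow> ('b, 'c) trm \<Rightarrow> bool" where
  "beq = equivclp beta_eta"

definition XiT :: "('b, 'c) trm" where "XiT = Cst Xi"
definition LT :: "('b, 'c) trm" where "LT = Cst Lc"
definition IT :: "('b, 'c) trm" where "IT = Lam (Var 0)"
definition KT :: "('b, 'c) trm" where "KT = Lam (Lam (Var 1))"
definition HT :: "('b, 'c) trm" where "HT = Lam (App LT (App KT (Var 0)))"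
definition FT :: "('b, 'c) trm" where
  "FT = Lam (Lam (Lam (App (App XiT (Var 2)) (Lam (App (Var 2) (App (Var 1) (Var 0)))))))"

section \<open>The illative systems I_omega (om = True) and I_0 (om = False)\<close>

inductive derives :: "bool \<Rightarrow> ('b, 'c) trm set \<Rightarrow> ('b, 'c) trm \<Rightarrow> bool" for om where
  ax: "finite \<Gamma> \<Longrightarrow> derives om (insert t \<Gamma>) t"
| LH: "finite \<Gamma> \<Longrightarrow> derives om \<Gamma> (App LT HT)"
| LA: "finite \<Gamma> \<Longrightarrow> derives om \<Gamma> (App LT (Cst (At \<tau>)))"
| Eq: "derives om \<Gamma> t1 \<Longrightarrow> beq t1 t2 \<Longrightarrow> derives om \<Gamma> t2"
| Hi: "derives om \<Gamma> t \<Longrightarrow> derives om \<Gamma> (App HT t)"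
| Xie: "derives om \<Gamma> (App (App XiT t1) t2) \<Longrightarrow> derives om \<Gamma> (App t1 t3)
         \<Longrightarrow> derives om \<Gamma> (App t2 t3)"
| Xii: "derives om (insert (App t1 (Var x)) \<Gamma>) (App t2 (Var x)) \<Longrightarrow> derives om \<Gamma> (App LT t1)
         \<Longrightarrow> x \<notin> fvs \<Gamma> \<union> fv t1 \<union> fv t2 \<Longrightarrow> derives om \<Gamma> (App (App XiT t1) t2)"
| XiH: "derives om (insert (App t1 (Var x)) \<Gamma>) (App HT (App t2 (Var x))) \<Longrightarrow> derives om \<Gamma> (App LT t1)
         \<Longrightarrow> x \<notin> fvs \<Gamma> \<union> fv t1 \<union> fv t2 \<Longrightarrow> derives om \<Gamma> (App HT (App (App XiT t1) t2))"
| FL: "om \<Longrightarrow> derives om (insert (App t1 (Var x)) \<Gamma>) (App LT t2) \<Longrightarrow> derives om \<Gamma> (App LT t1)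
         \<Longrightarrow> x \<notin> fvs \<Gamma> \<union> fv t1 \<union> fv t2 \<Longrightarrow> derives om \<Gamma> (App LT (App (App FT t1) t2))"

text \<open>Gamma |-_I t for arbitrary Gamma: some finite subset derives t.\<close>
definition provable :: "bool \<Rightarrow> ('b, 'c) trm set \<Rightarrow> ('b, 'c) trm \<Rightarrow> bool" where
  "provable om \<Gamma> t \<longleftrightarrow> (\<exists>\<Gamma>'. \<Gamma>' \<subseteq> \<Gamma> \<and> finite \<Gamma>' \<and> derives om \<Gamma>' t)"

text \<open>Combinatory algebra with carrier set C (inside the ambient type 'd).\<close>
definition comb_alg :: "'d set \<Rightarrow> ('d \<Rightarrow> 'd \<Rightarrow> 'd) \<Rightarrow> 'd \<Rightarrow> 'd \<Rightarrow> bool" where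
  "comb_alg C ap S K \<longleftrightarrow> S \<in> C \<and> K \<in> C \<and> (\<forall>X\<in>C. \<forall>Y\<in>C. ap X Y \<in> C)
     \<and> (\<forall>X\<in>C. \<forall>Y\<in>C. \<forall>Z\<in>C. ap (ap (ap S X) Y) Z = ap (ap X Z) (ap Y Z))
     \<and> (\<forall>X\<in>C. \<forall>Y\<in>C. ap (ap K X) Y = X)"

definition extensional_ca :: "'d set \<Rightarrow> ('d \<Rightarrow> 'd \<Rightarrow> 'd) \<Rightarrow> bool" where
  "extensional_ca C ap \<longleftrightarrow>
     (\<forall>M1\<in>C. \<forall>M2\<in>C. (\<forall>X\<in>C. ap M1 X = ap M2 X) \<longrightarrow> M1 = M2)"

definition scons :: "'d \<Rightarrow> (nat \<Rightarrow> 'd) \<Rightarrow> nat \<Rightarrow> 'd" where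
  "scons d u = (\<lambda>n. case n of 0 \<Rightarrow> d | Suc m \<Rightarrow> u m)"

fun eval :: "'d set \<Rightarrow> ('d \<Rightarrow> 'd \<Rightarrow> 'd) \<Rightarrow> (('b, 'c) const \<Rightarrow> 'd) \<Rightarrow> (nat \<Rightarrow> 'd)
             \<Rightarrow> ('b, 'c) trm \<Rightarrow> 'd" where
  "eval C ap I u (Var n) = u n"
| "eval C ap I u (Cst c) = I c"
| "eval C ap I u (App s t) = ap (eval C ap I u s) (eval C ap I u t)"
| "eval C ap I u (Lam t) = (THE d. d \<in> C \<and> (\<forall>d'\<in>C. ap d d' = eval C ap I (scons d' u) t))"

definition premodel :: "'s set \<Rightarrow> ('s \<Rightarrow> 's \<Rightarrow> bool) \<Rightarrow> 'd set \<Rightarrow> ('d \<Rightarrow> 'd \<Rightarrow> 'd) \<Rightarrow> 'd \<Rightarrow> 'd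
      \<Rightarrow> (('b, 'c) const \<Rightarrow> 'd) \<Rightarrow> ('d \<Rightarrow> 's set) \<Rightarrow> bool" where
  "premodel St le C ap S K I vs \<longleftrightarrow>
     (\<forall>s\<in>St. le s s) \<and> (\<forall>s\<in>St. \<forall>s'\<in>St. le s s' \<and> le s' s \<longrightarrow> s = s')
     \<and> (\<forall>s1\<in>St. \<forall>s2\<in>St. \<forall>s3\<in>St. le s1 s2 \<and> le s2 s3 \<longrightarrow> le s1 s3)
     \<and> comb_alg C ap S K \<and> extensional_ca C ap
     \<and> (\<forall>c. I c \<in> C)
     \<and> (\<forall>X\<in>C. vs X \<subseteq> St \<and> (\<forall>s\<in>vs X. \<forall>s'\<in>St. le s s' \<longrightarrow> s' \<in> vs X))"

text \<open>Illative Kripke model for I_omega (om = True) or I_0 (om = False).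
  The values of the closed terms H and F are taken under an arbitrary valuation
  (here the constant valuation K).\<close>
definition kmodel :: "bool \<Rightarrow> 's set \<Rightarrow> ('s \<Rightarrow> 's \<Rightarrow> bool) \<Rightarrow> 'd set \<Rightarrow> ('d \<Rightarrow> 'd \<Rightarrow> 'd) \<Rightarrow> 'd \<Rightarrow> 'd
      \<Rightarrow> (('b, 'c) const \<Rightarrow> 'd) \<Rightarrow> ('d \<Rightarrow> 's set) \<Rightarrow> bool" where
  "kmodel om St le C ap S K I vs \<longleftrightarrow> premodel St le C ap S K I vs \<and>
     (let XiV = I Xi; LV = I Lc;
          HV = eval C ap I (\<lambda>_. K) (HT :: ('b, 'c) trm);
          FV = eval C ap I (\<lambda>_. K) (FT :: ('b, 'c) trm) in
      \<forall>X\<in>C. \<forall>Y\<in>C. \<forall>s\<in>St.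
        ((s \<in> vs (ap LV X) \<and>
          (\<forall>s'\<in>St. \<forall>Z\<in>C. le s s' \<and> s' \<in> vs (ap X Z) \<longrightarrow> s' \<in> vs (ap Y Z)))
           \<longrightarrow> s \<in> vs (ap (ap XiV X) Y))
      \<and> (s \<in> vs (ap (ap XiV X) Y) \<longrightarrow> (\<forall>Z\<in>C. s \<in> vs (ap X Z) \<longrightarrow> s \<in> vs (ap Y Z)))
      \<and> ((s \<in> vs (ap LV X) \<and>
          (\<forall>s'\<in>St. \<forall>Z\<in>C. le s s' \<and> s' \<in> vs (ap X Z) \<longrightarrow> s' \<in> vs (ap HV (ap Y Z))))
           \<longrightarrow> s \<in> vs (ap HV (ap (ap XiV X) Y)))
      \<and> (om \<longrightarrow> (s \<in> vs (ap LV X) \<and>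
          (\<forall>s'\<in>St. le s s' \<and> (\<exists>Z\<in>C. s' \<in> vs (ap X Z)) \<longrightarrow> s' \<in> vs (ap LV Y)))
           \<longrightarrow> s \<in> vs (ap LV (ap (ap FV X) Y)))
      \<and> (s \<in> vs X \<longrightarrow> s \<in> vs (ap HV X))
      \<and> s \<in> vs (ap LV HV)
      \<and> (\<forall>\<tau>. s \<in> vs (ap LV (I (At \<tau>)))))"

text \<open>Gamma ||-_I t, restricted to models whose carrier lies in type 'd and whose
  states lie in type 's.\<close>
definition valid_at :: "'d itself \<Rightarrow> 's itself \<Rightarrow> bool \<Rightarrow> ('b, 'c) trm set \<Rightarrow> ('b, 'c) trm \<Rightarrow> bool" where
  "valid_at (_ :: 'd itself) (_ :: 's itself) om \<Gamma> t \<longleftrightarrow>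
     (\<forall>(St :: 's set) le (C :: 'd set) ap S K I vs. kmodel om St le C ap S K I vs \<longrightarrow>
        (\<forall>s\<in>St. \<forall>u. (\<forall>n. u n \<in> C) \<longrightarrow>
           (\<forall>t'\<in>\<Gamma>. s \<in> vs (eval C ap I u t')) \<longrightarrow> s \<in> vs (eval C ap I u t)))"

end

theory Submission
  imports Defs
begin

text \<open>Soundness is an induction on derivations in an arbitrary model.  It rests on the
  fact that, in an extensional combinatory algebra, combinatory completeness makes the
  interpretation of abstractions well defined, so that the interpretation respects
  renaming, substitution and beta-eta conversion.  The three rules discharging a
  hypothesis about a fresh variable x are validated at later states under the valuation
  updated at x.

  Completeness uses a canonical model.  Its carrier is the term model of beta-eta
  classes, its states are contexts with infinitely many unused variables ordered by
  inclusion, and a class holds at a state when it is provable there.  The supply of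
  unused variables validates the introduction conditions, by extending a state with a
  generic hypothesis.  A context is first renamed into the even variables so that it
  becomes a state; validity then yields a derivation of the renamed judgement, and
  renaming back (derivations are closed under renaming, which also gives weakening)
  yields the required one.\<close>

section \<open>Renamings and parallel substitutions\<close>

text \<open>The de Bruijn operations lift and subst of the object language are instances of
  two general operations: renaming by a function on indices and simultaneous
  substitution of terms for all indices.  Their composition laws turn all later
  bookkeeping about free variables into equational reasoning.\<close>

definition upr :: "(nat \<Rightarrow> nat) \<Rightarrow> nat \<Rightarrow> nat" where
  "upr f n = (case n of 0 \<Rightarrow> 0 | Suc m \<Rightarrow> Suc (f m))"

lemma upr_simps [simp]: "upr f 0 = 0" "upr f (Suc m) = Suc (f m)"
  by (simp_all add: upr_def)

fun ren :: "(nat \<Rightarrow> nat) \<Rightarrow> ('b, 'c) trm \<Rightarrow> ('b, 'c) trm" where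
  "ren f (Var i) = Var (f i)"
| "ren f (Cst c) = Cst c"
| "ren f (App s t) = App (ren f s) (ren f t)"
| "ren f (Lam t) = Lam (ren (upr f) t)"

definition ups :: "(nat \<Rightarrow> ('b, 'c) trm) \<Rightarrow> nat \<Rightarrow> ('b, 'c) trm" where
  "ups \<sigma> n = (case n of 0 \<Rightarrow> Var 0 | Suc m \<Rightarrow> ren Suc (\<sigma> m))"

lemma ups_simps [simp]: "ups \<sigma> 0 = Var 0" "ups \<sigma> (Suc m) = ren Suc (\<sigma> m)"
  by (simp_all add: ups_def)

fun psubst :: "(nat \<Rightarrow> ('b, 'c) trm) \<Rightarrow> ('b, 'c) trm \<Rightarrow> ('b, 'c) trm" where
  "psubst \<sigma> (Var i) = \<sigma> i"
| "psubst \<sigma> (Cst c) = Cst c"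
| "psubst \<sigma> (App s t) = App (psubst \<sigma> s) (psubst \<sigma> t)"
| "psubst \<sigma> (Lam t) = Lam (psubst (ups \<sigma>) t)"

lemma ren_cong: "(\<And>i. i \<in> fv t \<Longrightarrow> f i = g i) \<Longrightarrow> ren f t = ren g t"
proof (induction t arbitrary: f g)
  case (Lam t)
  have "ren (upr f) t = ren (upr g) t"
  proof (rule Lam.IH)
    fix i assume "i \<in> fv t"
    then show "upr f i = upr g i" using Lam.prems by (cases i) auto
  qed
  then show ?case by simp
next
  case (App s u)
  have "ren f s = ren g s" by (rule App.IH(1)) (simp add: App.prems)
  moreover have "ren f u = ren g u" by (rule App.IH(2)) (simp add: App.prems)
  ultimately show ?case by simp
qed simp_all

lemma psubst_cong: "(\<And>i. i \<in> fv t \<Longrightarrow> \<sigma> i = \<tau> i) \<Longrightarrow> psubst \<sigma> t = psubst \<tau> t"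
proof (induction t arbitrary: \<sigma> \<tau>)
  case (Lam t)
  have "psubst (ups \<sigma>) t = psubst (ups \<tau>) t"
  proof (rule Lam.IH)
    fix i assume "i \<in> fv t"
    then show "ups \<sigma> i = ups \<tau> i" using Lam.prems by (cases i) auto
  qed
  then show ?case by simp
next
  case (App s u)
  have "psubst \<sigma> s = psubst \<tau> s" by (rule App.IH(1)) (simp add: App.prems)
  moreover have "psubst \<sigma> u = psubst \<tau> u" by (rule App.IH(2)) (simp add: App.prems)
  ultimately show ?case by simp
qed simp_all

lemma upr_comp: "upr f \<circ> upr g = upr (f \<circ> g)"
  by (auto simp: upr_def split: nat.splits)

lemma ren_ren: "ren f (ren g t) = ren (f \<circ> g) t"
  by (induction t arbitrary: f g) (auto simp: upr_comp)

lemma ups_upr: "ups \<sigma> \<circ> upr f = ups (\<sigma> \<circ> f)"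
  by (auto simp: upr_def ups_def split: nat.splits)

lemma psubst_ren: "psubst \<sigma> (ren f t) = psubst (\<sigma> \<circ> f) t"
  by (induction t arbitrary: \<sigma> f) (auto simp: ups_upr)

lemma upr_ups: "ren (upr f) \<circ> ups \<sigma> = ups (ren f \<circ> \<sigma>)"
proof
  fix n show "(ren (upr f) \<circ> ups \<sigma>) n = ups (ren f \<circ> \<sigma>) n"
    by (cases n) (auto simp: ren_ren comp_def)
qed

lemma ren_psubst: "ren f (psubst \<sigma> t) = psubst (ren f \<circ> \<sigma>) t"
  by (induction t arbitrary: \<sigma> f) (auto simp: upr_ups)

lemma ups_ups: "psubst (ups \<sigma>) \<circ> ups \<tau> = ups (psubst \<sigma> \<circ> \<tau>)"
proof
  fix n show "(psubst (ups \<sigma>) \<circ> ups \<tau>) n = ups (psubst \<sigma> \<circ> \<tau>) n"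
    by (cases n) (auto simp: psubst_ren ren_psubst comp_def intro!: psubst_cong)
qed

lemma psubst_psubst: "psubst \<sigma> (psubst \<tau> t) = psubst (psubst \<sigma> \<circ> \<tau>) t"
  by (induction t arbitrary: \<sigma> \<tau>) (auto simp: ups_ups)

lemma ups_Var: "ups (\<lambda>i. Var (f i)) = (\<lambda>i. Var (upr f i))"
  by (auto simp: fun_eq_iff ups_def upr_def split: nat.splits)

lemma ren_as_psubst: "ren f t = psubst (\<lambda>i. Var (f i)) t"
  by (induction t arbitrary: f) (simp_all add: ups_Var)

lemma ren_id: "ren id t = t"
proof -
  have "upr id = id" by (auto simp: fun_eq_iff upr_def split: nat.splits)
  then show ?thesis by (induction t) simp_all
qed

lemma psubst_Var: "(\<And>i. \<sigma> i = Var i) \<Longrightarrow> psubst \<sigma> t = t"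
proof -
  assume "\<And>i. \<sigma> i = Var i"
  then have "\<sigma> = (\<lambda>i. Var (id i))" by auto
  then show ?thesis using ren_id[of t] by (simp add: ren_as_psubst)
qed

lemma closed_psubst: "fv t = {} \<Longrightarrow> psubst \<sigma> t = t"
  using psubst_cong[of t \<sigma> Var] psubst_Var[of Var t] by simp

lemma closed_ren: "fv t = {} \<Longrightarrow> ren f t = t"
  by (simp add: ren_as_psubst closed_psubst)

lemma fv_ren: "fv (ren f t) = f ` fv t"
proof (induction t arbitrary: f)
  case (Lam t)
  have "{n. Suc n \<in> upr f ` fv t} = f ` {n. Suc n \<in> fv t}"
  proof (intro set_eqI iffI)
    fix n assume "n \<in> {n. Suc n \<in> upr f ` fv t}"
    then obtain i where "i \<in> fv t" "Suc n = upr f i" by auto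
    then show "n \<in> f ` {n. Suc n \<in> fv t}" by (cases i) auto
  next
    fix n assume "n \<in> f ` {n. Suc n \<in> fv t}"
    then obtain j where "Suc j \<in> fv t" "n = f j" by auto
    then show "n \<in> {n. Suc n \<in> upr f ` fv t}" by (auto intro: image_eqI[of _ _ "Suc j"])
  qed
  then show ?case using Lam by simp
qed auto

lemma finite_fv: "finite (fv t)"
proof (induction t)
  case (Lam t)
  have "{n. Suc n \<in> fv t} \<subseteq> (\<lambda>n. n - 1) ` fv t" by force
  then show ?case using Lam by (simp add: finite_subset)
qed auto

lemma finite_fvs: "finite \<Gamma> \<Longrightarrow> finite (fvs \<Gamma>)"
  by (simp add: fvs_def finite_fv)

lemma fvs_insert [simp]: "fvs (insert a \<Gamma>) = fv a \<union> fvs \<Gamma>"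
  by (simp add: fvs_def)

lemma fvs_mono: "\<Gamma> \<subseteq> \<Delta> \<Longrightarrow> fvs \<Gamma> \<subseteq> fvs \<Delta>"
  by (auto simp: fvs_def)

lemma closed_combinators [simp]: "fv HT = {}" "fv FT = {}" "fv KT = {}" "fv LT = {}" "fv XiT = {}"
  by (auto simp: HT_def FT_def KT_def LT_def XiT_def)

lemma lift_as_ren: "lift k t = ren (\<lambda>i. if i < k then i else Suc i) t"
proof (induction t arbitrary: k)
  case (Lam t)
  have "upr (\<lambda>i. if i < k then i else Suc i) = (\<lambda>i. if i < Suc k then i else Suc i)"
    by (auto simp: fun_eq_iff upr_def split: nat.splits)
  then show ?case using Lam by simp
qed auto

lemma lift0_as_ren: "lift 0 t = ren Suc t"
  by (simp add: lift_as_ren)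

definition ssub :: "nat \<Rightarrow> ('b, 'c) trm \<Rightarrow> nat \<Rightarrow> ('b, 'c) trm" where
  "ssub k s i = (if i < k then Var i else if i = k then s else Var (i - 1))"

lemma subst_as_psubst: "subst t k s = psubst (ssub k s) t"
proof (induction t arbitrary: k s)
  case (Lam t)
  have "ups (ssub k s) = ssub (Suc k) (lift 0 s)"
    by (auto simp: fun_eq_iff ups_def ssub_def lift0_as_ren split: nat.splits)
  then show ?case using Lam by simp
qed (auto simp: ssub_def)

lemma scons_simps [simp]: "scons d u 0 = d" "scons d u (Suc n) = u n"
  by (simp_all add: scons_def)

lemma subst0_as_psubst: "subst s 0 t = psubst (scons t Var) s"
  unfolding subst_as_psubst by (rule psubst_cong) (auto simp: ssub_def scons_def split: nat.split)

lemma psubst_scons_shift: "psubst (scons t Var) (ren Suc s) = s"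
  by (simp add: psubst_ren psubst_Var)

section \<open>Beta-eta conversion\<close>

lemma beta_eta_psubst: "beta_eta s s' \<Longrightarrow> beta_eta (psubst \<sigma> s) (psubst \<sigma> s')"
proof (induction arbitrary: \<sigma> rule: beta_eta.induct)
  case (beta s t)
  have "psubst \<sigma> (subst s 0 t) = subst (psubst (ups \<sigma>) s) 0 (psubst \<sigma> t)"
    unfolding subst0_as_psubst psubst_psubst
  proof (rule psubst_cong)
    fix i show "(psubst \<sigma> \<circ> scons t Var) i = (psubst (scons (psubst \<sigma> t) Var) \<circ> ups \<sigma>) i"
      by (cases i) (simp_all add: psubst_scons_shift)
  qed
  then show ?case by (simp add: beta_eta.beta)
next
  case (eta s)
  have "psubst (ups \<sigma>) (lift 0 s) = lift 0 (psubst \<sigma> s)"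
    unfolding lift0_as_ren psubst_ren ren_psubst by (rule psubst_cong) simp
  then show ?case using beta_eta.eta[of "psubst \<sigma> s"] by simp
qed (auto intro: beta_eta.intros)

lemma beq_refl [simp]: "beq t t" by (simp add: beq_def)
lemma beq_sym: "beq s t \<Longrightarrow> beq t s" by (simp add: beq_def equivclp_sym)
lemma beq_trans [trans]: "beq s t \<Longrightarrow> beq t u \<Longrightarrow> beq s u"
  unfolding beq_def by (rule equivclp_trans)
lemma beq_step: "beta_eta s t \<Longrightarrow> beq s t" by (auto simp: beq_def)

lemma beq_map:
  assumes "\<And>a b. beta_eta a b \<Longrightarrow> beta_eta (h a) (h b)" and "beq s t"
  shows "beq (h s) (h t)"
  using assms(2) unfolding beq_def
proof (induction rule: equivclp_induct)
  case (step y z)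
  then show ?case using assms(1) by (meson equivclp_into_equivclp)
qed simp

lemma beq_psubst: "beq s t \<Longrightarrow> beq (psubst \<sigma> s) (psubst \<sigma> t)"
  by (rule beq_map[OF beta_eta_psubst])

lemma beq_ren: "beq s t \<Longrightarrow> beq (ren f s) (ren f t)"
  by (simp add: ren_as_psubst beq_psubst)

lemma beq_App: "beq s s' \<Longrightarrow> beq t t' \<Longrightarrow> beq (App s t) (App s' t')"
proof -
  assume "beq s s'" "beq t t'"
  have "beq (App s t) (App s' t)"
    by (rule beq_map[where h="\<lambda>x. App x t"]) (auto intro: beta_eta.intros \<open>beq s s'\<close>)
  also have "beq (App s' t) (App s' t')"
    by (rule beq_map[where h="App s'"]) (auto intro: beta_eta.intros \<open>beq t t'\<close>)
  finally show ?thesis .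
qed

lemma beq_Lam: "beq s s' \<Longrightarrow> beq (Lam s) (Lam s')"
  by (rule beq_map) (auto intro: beta_eta.intros)

lemma beq_beta: "psubst (scons t Var) s = r \<Longrightarrow> beq (App (Lam s) t) r"
  using beq_step[OF beta_eta.beta[of s t]] by (simp add: subst0_as_psubst)

section \<open>Interpretation in an extensional combinatory algebra\<close>

text \<open>The interpretation of an abstraction is defined by a definite description.
  Combinatory completeness (every term with k abstracted variables is represented by
  an element of the algebra) shows that the description always denotes, so that the
  interpretation satisfies the beta and eta laws and respects substitution.\<close>

fun apps :: "('d \<Rightarrow> 'd \<Rightarrow> 'd) \<Rightarrow> 'd \<Rightarrow> 'd list \<Rightarrow> 'd" where
  "apps ap d [] = d"
| "apps ap d (x # xs) = apps ap (ap d x) xs"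

(* the valuation extended by the list ds; its last element becomes index 0 *)
fun pushes :: "'d list \<Rightarrow> (nat \<Rightarrow> 'd) \<Rightarrow> nat \<Rightarrow> 'd" where
  "pushes [] u = u"
| "pushes (x # xs) u = pushes xs (scons x u)"

lemma apps_snoc: "apps ap d (ds @ [x]) = ap (apps ap d ds) x"
  by (induction ds arbitrary: d) auto

lemma pushes_snoc: "pushes (ds @ [x]) u = scons x (pushes ds u)"
  by (induction ds arbitrary: u) auto

lemma pushes_ge: "length ds \<le> i \<Longrightarrow> pushes ds u i = u (i - length ds)"
proof (induction ds arbitrary: u i)
  case (Cons x ds)
  then have "pushes ds (scons x u) i = scons x u (i - length ds)" by simp
  moreover have "i - length ds = Suc (i - length (x # ds))" using Cons.prems by simp
  ultimately show ?case by simp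
qed simp

lemma scons_comp_upr: "scons d u \<circ> upr f = scons d (u \<circ> f)"
  by (auto simp: fun_eq_iff scons_def upr_def split: nat.splits)

(* the definite description for abstractions is only ever unfolded through ev_Lam_eqI *)
declare eval.simps(4) [simp del]

locale comb_model =
  fixes C :: "'d set" and ap :: "'d \<Rightarrow> 'd \<Rightarrow> 'd" and S K :: 'd
    and I :: "('b, 'c) const \<Rightarrow> 'd"
  assumes ca: "comb_alg C ap S K" and ext: "extensional_ca C ap" and I_C: "\<And>c. I c \<in> C"
begin

abbreviation ev :: "(nat \<Rightarrow> 'd) \<Rightarrow> ('b, 'c) trm \<Rightarrow> 'd" where
  "ev u t \<equiv> eval C ap I u t"

lemma S_C: "S \<in> C" and K_C: "K \<in> C" and ap_C: "X \<in> C \<Longrightarrow> Y \<in> C \<Longrightarrow> ap X Y \<in> C"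
  and S_ap: "X \<in> C \<Longrightarrow> Y \<in> C \<Longrightarrow> Z \<in> C \<Longrightarrow> ap (ap (ap S X) Y) Z = ap (ap X Z) (ap Y Z)"
  and K_ap: "X \<in> C \<Longrightarrow> Y \<in> C \<Longrightarrow> ap (ap K X) Y = X"
  using ca unfolding comb_alg_def by auto

lemma extI: "M1 \<in> C \<Longrightarrow> M2 \<in> C \<Longrightarrow> (\<And>X. X \<in> C \<Longrightarrow> ap M1 X = ap M2 X) \<Longrightarrow> M1 = M2"
  using ext unfolding extensional_ca_def by blast

lemma apps_C: "d \<in> C \<Longrightarrow> set ds \<subseteq> C \<Longrightarrow> apps ap d ds \<in> C"
  by (induction ds arbitrary: d) (auto simp: ap_C)

lemma scons_C: "d \<in> C \<Longrightarrow> (\<And>n. u n \<in> C) \<Longrightarrow> scons d u n \<in> C"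
  by (cases n) auto

(* by extensionality, any element with the defining property is the value of an abstraction *)
lemma ev_Lam_eqI:
  assumes eC: "e \<in> C" and eq: "\<And>d'. d' \<in> C \<Longrightarrow> ap e d' = ev (scons d' u) t"
  shows "ev u (Lam t) = e"
proof -
  have "(THE d. d \<in> C \<and> (\<forall>d'\<in>C. ap d d' = ev (scons d' u) t)) = e"
  proof (rule the_equality)
    fix d assume d: "d \<in> C \<and> (\<forall>d'\<in>C. ap d d' = ev (scons d' u) t)"
    show "d = e" by (rule extI) (use d eC eq in auto)
  qed (use eC eq in blast)
  then show ?thesis by (simp add: eval.simps(4))
qed

lemma const_comb: "\<exists>e\<in>C. \<forall>c\<in>C. \<forall>ds. length ds = k \<longrightarrow> set ds \<subseteq> C \<longrightarrow> apps ap (ap e c) ds = c"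
proof (induction k)
  case 0
  have "ap (ap (ap S K) K) c = c" if "c \<in> C" for c
    using that by (simp add: S_ap K_ap K_C ap_C)
  then show ?case using S_C K_C ap_C by (auto intro!: bexI[of _ "ap (ap S K) K"])
next
  case (Suc k)
  then obtain e where e: "e \<in> C"
    "\<forall>c\<in>C. \<forall>ds. length ds = k \<longrightarrow> set ds \<subseteq> C \<longrightarrow> apps ap (ap e c) ds = c"
    by blast
  define e' where "e' = ap (ap S (ap K K)) e"
  have e'C: "e' \<in> C" using e K_C S_C by (simp add: e'_def ap_C)
  have "ap e' c = ap K (ap e c)" if "c \<in> C" for c
    using that e K_C S_C by (simp add: e'_def S_ap K_ap ap_C)
  then have "\<forall>c\<in>C. \<forall>ds. length ds = Suc k \<longrightarrow> set ds \<subseteq> C \<longrightarrow> apps ap (ap e' c) ds = c"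
    using e K_C by (auto simp: length_Suc_conv K_ap ap_C)
  then show ?case using e'C by blast
qed

lemma const_rep: "c \<in> C \<Longrightarrow> \<exists>e\<in>C. \<forall>ds. length ds = k \<longrightarrow> set ds \<subseteq> C \<longrightarrow> apps ap e ds = c"
  using const_comb[of k] by (meson ap_C)

lemma app_comb: "\<exists>s\<in>C. \<forall>a\<in>C. \<forall>b\<in>C. \<forall>ds. length ds = k \<longrightarrow> set ds \<subseteq> C \<longrightarrow>
   apps ap (ap (ap s a) b) ds = ap (apps ap a ds) (apps ap b ds)"
proof (induction k)
  case 0
  obtain i where "i \<in> C" "\<forall>c\<in>C. ap i c = c" using const_comb[of 0] by auto
  then show ?case by (auto intro!: bexI[of _ i])
next
  case (Suc k)
  then obtain s where s: "s \<in> C" "\<forall>a\<in>C. \<forall>b\<in>C. \<forall>ds. length ds = k \<longrightarrow> set ds \<subseteq> C \<longrightarrow>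
   apps ap (ap (ap s a) b) ds = ap (apps ap a ds) (apps ap b ds)" by blast
  define s' where "s' = ap (ap S (ap K S)) (ap S (ap K s))"
  have s'C: "s' \<in> C" using s K_C S_C by (simp add: s'_def ap_C)
  have step: "ap (ap (ap s' a) b) d = ap (ap s (ap a d)) (ap b d)"
    if "a \<in> C" "b \<in> C" "d \<in> C" for a b d
  proof -
    have "ap s' a = ap S (ap (ap S (ap K s)) a)"
      using that s K_C S_C by (simp add: s'_def S_ap K_ap ap_C)
    then have "ap (ap (ap s' a) b) d = ap (ap (ap (ap S (ap K s)) a) d) (ap b d)"
      using that s K_C S_C by (simp add: S_ap ap_C)
    also have "\<dots> = ap (ap s (ap a d)) (ap b d)"
      using that s K_C S_C by (simp add: S_ap K_ap ap_C)
    finally show ?thesis .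
  qed
  have "apps ap (ap (ap s' a) b) ds = ap (apps ap a ds) (apps ap b ds)"
    if len: "length ds = Suc k" and "a \<in> C" "b \<in> C" "set ds \<subseteq> C" for a b ds
  proof -
    obtain d ds' where "ds = d # ds'" "length ds' = k" using len by (cases ds) auto
    then show ?thesis using that s step by (simp add: ap_C)
  qed
  then show ?case using s'C by blast
qed

lemma proj_comb: "i < k \<Longrightarrow>
  \<exists>e\<in>C. \<forall>ds u. length ds = k \<longrightarrow> set ds \<subseteq> C \<longrightarrow> apps ap e ds = pushes ds u i"
proof (induction k)
  case (Suc k)
  show ?case
  proof (cases "i = k")
    case True
    obtain e where e: "e \<in> C"
      "\<forall>c\<in>C. \<forall>ds. length ds = k \<longrightarrow> set ds \<subseteq> C \<longrightarrow> apps ap (ap e c) ds = c"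
      using const_comb[of k] by blast
    have "apps ap e ds = pushes ds u i" if len: "length ds = Suc k" and "set ds \<subseteq> C" for ds u
    proof -
      obtain d ds' where "ds = d # ds'" "length ds' = k" using len by (cases ds) auto
      then show ?thesis using that e True by (simp add: pushes_ge)
    qed
    then show ?thesis using e by blast
  next
    case False
    then obtain e where e: "e \<in> C"
      "\<forall>ds u. length ds = k \<longrightarrow> set ds \<subseteq> C \<longrightarrow> apps ap e ds = pushes ds u i"
      using Suc by auto
    have "apps ap (ap K e) ds = pushes ds u i" if len: "length ds = Suc k" and "set ds \<subseteq> C" for ds u
    proof -
      obtain d ds' where "ds = d # ds'" "length ds' = k" using len by (cases ds) auto
      then show ?thesis using that e by (simp add: K_ap)
    qed
    then show ?thesis using e K_C by (meson ap_C)
  qed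
qed simp

lemma comb_complete: "(\<And>n. u n \<in> C) \<Longrightarrow>
  \<exists>d\<in>C. \<forall>ds. length ds = k \<longrightarrow> set ds \<subseteq> C \<longrightarrow> apps ap d ds = ev (pushes ds u) t"
proof (induction t arbitrary: k)
  case (Var i)
  show ?case
  proof (cases "i < k")
    case True
    then show ?thesis using proj_comb[of i k] by auto
  next
    case False
    obtain e where "e \<in> C" "\<forall>ds. length ds = k \<longrightarrow> set ds \<subseteq> C \<longrightarrow> apps ap e ds = u (i - k)"
      using const_rep[OF Var.prems] by blast
    then show ?thesis using False by (auto simp: pushes_ge)
  qed
next
  case (Cst c)
  then show ?case using const_rep[OF I_C] by simp
next
  case (App s t)
  obtain a where a: "a \<in> C"
    "\<forall>ds. length ds = k \<longrightarrow> set ds \<subseteq> C \<longrightarrow> apps ap a ds = ev (pushes ds u) s"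
    using App.IH(1)[OF App.prems] by blast
  obtain b where b: "b \<in> C"
    "\<forall>ds. length ds = k \<longrightarrow> set ds \<subseteq> C \<longrightarrow> apps ap b ds = ev (pushes ds u) t"
    using App.IH(2)[OF App.prems] by blast
  obtain s0 where s0: "s0 \<in> C" "\<forall>a\<in>C. \<forall>b\<in>C. \<forall>ds. length ds = k \<longrightarrow> set ds \<subseteq> C \<longrightarrow>
    apps ap (ap (ap s0 a) b) ds = ap (apps ap a ds) (apps ap b ds)"
    using app_comb by blast
  show ?case using a b s0 by (intro bexI[of _ "ap (ap s0 a) b"]) (auto simp: ap_C)
next
  case (Lam t)
  obtain d where d: "d \<in> C"
    "\<forall>ds. length ds = Suc k \<longrightarrow> set ds \<subseteq> C \<longrightarrow> apps ap d ds = ev (pushes ds u) t"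
    using Lam.IH[OF Lam.prems] by blast
  have "apps ap d ds = ev (pushes ds u) (Lam t)" if ds: "length ds = k" "set ds \<subseteq> C" for ds
  proof (rule sym, rule ev_Lam_eqI)
    show "apps ap d ds \<in> C" using d ds by (simp add: apps_C)
    fix d' assume "d' \<in> C"
    then show "ap (apps ap d ds) d' = ev (scons d' (pushes ds u)) t"
      using d(2)[rule_format, of "ds @ [d']"] ds by (simp add: apps_snoc pushes_snoc)
  qed
  then show ?case using d by blast
qed

lemma ev_C: "(\<And>n. u n \<in> C) \<Longrightarrow> ev u t \<in> C"
  using comb_complete[where u=u and k=0 and t=t] by auto

lemma ev_Lam: "(\<And>n. u n \<in> C) \<Longrightarrow> d' \<in> C \<Longrightarrow> ap (ev u (Lam t)) d' = ev (scons d' u) t"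
proof -
  assume u: "\<And>n. u n \<in> C" and d': "d' \<in> C"
  obtain d where d: "d \<in> C"
    "\<forall>ds. length ds = 1 \<longrightarrow> set ds \<subseteq> C \<longrightarrow> apps ap d ds = ev (pushes ds u) t"
    using comb_complete[where u=u and k=1 and t=t] u by blast
  have dd: "ap d x = ev (scons x u) t" if "x \<in> C" for x
    using d(2)[rule_format, of "[x]"] that by simp
  have "ev u (Lam t) = d" by (rule ev_Lam_eqI) (use d dd in auto)
  then show ?thesis using dd d' by simp
qed

lemma ev_ren: "(\<And>n. u n \<in> C) \<Longrightarrow> ev u (ren f t) = ev (u \<circ> f) t"
proof (induction t arbitrary: u f)
  case (Lam t)
  have uf: "\<And>n. (u \<circ> f) n \<in> C" using Lam.prems by simp
  show ?case unfolding ren.simps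
  proof (rule ev_Lam_eqI)
    show "ev (u \<circ> f) (Lam t) \<in> C" by (rule ev_C) (rule uf)
    fix d' assume d': "d' \<in> C"
    have sC: "\<And>n. scons d' u n \<in> C" using scons_C[OF d' Lam.prems] .
    have "ev (scons d' u) (ren (upr f) t) = ev (scons d' u \<circ> upr f) t"
      using Lam.IH[where u="scons d' u" and f="upr f"] sC by blast
    moreover have "ap (ev (u \<circ> f) (Lam t)) d' = ev (scons d' (u \<circ> f)) t"
      by (rule ev_Lam[OF uf d'])
    ultimately show "ap (ev (u \<circ> f) (Lam t)) d' = ev (scons d' u) (ren (upr f) t)"
      by (simp add: scons_comp_upr)
  qed
qed auto

lemma ev_psubst: "(\<And>n. u n \<in> C) \<Longrightarrow> ev u (psubst \<sigma> t) = ev (\<lambda>n. ev u (\<sigma> n)) t"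
proof (induction t arbitrary: u \<sigma>)
  case (Lam t)
  have uf: "\<And>n. ev u (\<sigma> n) \<in> C" using Lam.prems ev_C by blast
  show ?case unfolding psubst.simps
  proof (rule ev_Lam_eqI)
    show "ev (\<lambda>n. ev u (\<sigma> n)) (Lam t) \<in> C" by (rule ev_C) (rule uf)
    fix d' assume d': "d' \<in> C"
    have sC: "\<And>n. scons d' u n \<in> C" using scons_C[OF d' Lam.prems] .
    have "ev (scons d' u) (psubst (ups \<sigma>) t) = ev (\<lambda>n. ev (scons d' u) (ups \<sigma> n)) t"
      using Lam.IH[where u="scons d' u" and \<sigma>="ups \<sigma>"] sC by blast
    also have "(\<lambda>n. ev (scons d' u) (ups \<sigma> n)) = scons d' (\<lambda>n. ev u (\<sigma> n))"
    proof
      fix n show "ev (scons d' u) (ups \<sigma> n) = scons d' (\<lambda>n. ev u (\<sigma> n)) n"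
        by (cases n) (auto simp: ev_ren[OF sC] comp_def)
    qed
    finally show "ap (ev (\<lambda>n. ev u (\<sigma> n)) (Lam t)) d' = ev (scons d' u) (psubst (ups \<sigma>) t)"
      using ev_Lam[OF uf d'] by simp
  qed
qed auto

lemma ev_cong: "(\<And>n. u n \<in> C) \<Longrightarrow> (\<And>n. u' n \<in> C) \<Longrightarrow> (\<And>n. n \<in> fv t \<Longrightarrow> u n = u' n)
   \<Longrightarrow> ev u t = ev u' t"
proof (induction t arbitrary: u u')
  case (Lam t)
  show ?case
  proof (rule ev_Lam_eqI)
    show "ev u' (Lam t) \<in> C" by (rule ev_C) (rule Lam.prems(2))
    fix d' assume d': "d' \<in> C"
    have "ev (scons d' u) t = ev (scons d' u') t"
    proof (rule Lam.IH)
      show "scons d' u n \<in> C" "scons d' u' n \<in> C" for n using scons_C d' Lam.prems by auto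
      fix n assume "n \<in> fv t" then show "scons d' u n = scons d' u' n"
        using Lam.prems(3) by (cases n) auto
    qed
    then show "ap (ev u' (Lam t)) d' = ev (scons d' u) t" using ev_Lam[OF Lam.prems(2) d'] by simp
  qed
next
  case (App s t)
  have "ev u s = ev u' s" by (rule App.IH(1)) (use App.prems in auto)
  moreover have "ev u t = ev u' t" by (rule App.IH(2)) (use App.prems in auto)
  ultimately show ?case by simp
qed auto

lemma ev_update_fresh: "(\<And>n. u n \<in> C) \<Longrightarrow> Z \<in> C \<Longrightarrow> x \<notin> fv t \<Longrightarrow> ev (u(x := Z)) t = ev u t"
  by (rule ev_cong) auto

lemma ev_beta_eta: "beta_eta s s' \<Longrightarrow> (\<And>n. u n \<in> C) \<Longrightarrow> ev u s = ev u s'"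
proof (induction arbitrary: u rule: beta_eta.induct)
  case (beta s t)
  have tC: "ev u t \<in> C" by (rule ev_C) (rule beta.prems)
  have "ev u (subst s 0 t) = ev (\<lambda>n. ev u (scons t Var n)) s"
    unfolding subst0_as_psubst by (rule ev_psubst) (rule beta.prems)
  also have "(\<lambda>n. ev u (scons t Var n)) = scons (ev u t) u"
    by (auto simp: fun_eq_iff scons_def split: nat.split)
  finally show ?case using ev_Lam[OF beta.prems tC] by simp
next
  case (eta s)
  show ?case
  proof (rule ev_Lam_eqI)
    show "ev u s \<in> C" by (rule ev_C) (rule eta.prems)
    fix d' assume d': "d' \<in> C"
    have "ev (scons d' u) (lift 0 s) = ev (scons d' u \<circ> Suc) s"
      unfolding lift0_as_ren by (rule ev_ren) (rule scons_C[OF d' eta.prems])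
    also have "scons d' u \<circ> Suc = u" by (simp add: fun_eq_iff)
    finally show "ap (ev u s) d' = ev (scons d' u) (App (lift 0 s) (Var 0))" by simp
  qed
next
  case (lam s s')
  show ?case
  proof (rule ev_Lam_eqI)
    show "ev u (Lam s') \<in> C" by (rule ev_C) (rule lam.prems)
    fix d' assume d': "d' \<in> C"
    have "ev (scons d' u) s = ev (scons d' u) s'" by (rule lam.IH) (rule scons_C[OF d' lam.prems])
    then show "ap (ev u (Lam s')) d' = ev (scons d' u) s" using ev_Lam[OF lam.prems d'] by simp
  qed
qed simp_all

lemma ev_beq: "beq s s' \<Longrightarrow> (\<And>n. u n \<in> C) \<Longrightarrow> ev u s = ev u s'"
  unfolding beq_def
proof (induction rule: equivclp_induct)
  case (step y z)
  then show ?case using ev_beta_eta by metis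
qed simp

end

section \<open>Soundness\<close>

locale kripke_model = comb_model C ap S K I for C :: "'d set" and ap S K
    and I :: "('b, 'c) const \<Rightarrow> 'd" +
  fixes om :: bool and St :: "'s set" and le and vs
  assumes kmod: "kmodel om St le C ap S K I vs"
begin

definition HV :: 'd where "HV = ev (\<lambda>_. K) HT"
definition FV :: 'd where "FV = ev (\<lambda>_. K) FT"

(* the closed terms H and F have the same value under every valuation *)
lemma ev_HT: "(\<And>n. u n \<in> C) \<Longrightarrow> ev u HT = HV"
  unfolding HV_def by (rule ev_cong) (auto simp: K_C)

lemma ev_FT: "(\<And>n. u n \<in> C) \<Longrightarrow> ev u FT = FV"
  unfolding FV_def by (rule ev_cong) (auto simp: K_C)

lemma up_closed: "X \<in> C \<Longrightarrow> s \<in> vs X \<Longrightarrow> s' \<in> St \<Longrightarrow> le s s' \<Longrightarrow> s' \<in> vs X"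
  using kmod unfolding kmodel_def premodel_def by blast

lemmas model_conds = kmod[unfolded kmodel_def Let_def, THEN conjunct2, folded HV_def FV_def,
  rule_format]

lemma model_Xi_intro:
  assumes "X \<in> C" "Y \<in> C" "s \<in> St" "s \<in> vs (ap (I Lc) X)"
    and "\<And>s' Z. s' \<in> St \<Longrightarrow> Z \<in> C \<Longrightarrow> le s s' \<Longrightarrow> s' \<in> vs (ap X Z) \<Longrightarrow> s' \<in> vs (ap Y Z)"
  shows "s \<in> vs (ap (ap (I Xi) X) Y)"
  using model_conds[OF assms(1-3)] assms(4-) by blast

lemma model_Xi_elim:
  assumes "X \<in> C" "Y \<in> C" "s \<in> St" "s \<in> vs (ap (ap (I Xi) X) Y)" "Z \<in> C" "s \<in> vs (ap X Z)"
  shows "s \<in> vs (ap Y Z)"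
  using model_conds[OF assms(1-3)] assms(4-) by blast

lemma model_XiH:
  assumes "X \<in> C" "Y \<in> C" "s \<in> St" "s \<in> vs (ap (I Lc) X)"
    and "\<And>s' Z. s' \<in> St \<Longrightarrow> Z \<in> C \<Longrightarrow> le s s' \<Longrightarrow> s' \<in> vs (ap X Z) \<Longrightarrow> s' \<in> vs (ap HV (ap Y Z))"
  shows "s \<in> vs (ap HV (ap (ap (I Xi) X) Y))"
  using model_conds[OF assms(1-3)] assms(4-) by blast

lemma model_FL:
  assumes om "X \<in> C" "Y \<in> C" "s \<in> St" "s \<in> vs (ap (I Lc) X)"
    and "\<And>s' Z. s' \<in> St \<Longrightarrow> Z \<in> C \<Longrightarrow> le s s' \<Longrightarrow> s' \<in> vs (ap X Z) \<Longrightarrow> s' \<in> vs (ap (I Lc) Y)"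
  shows "s \<in> vs (ap (I Lc) (ap (ap FV X) Y))"
  using model_conds[OF assms(2-4)] assms(1,5-) by blast

lemma model_H_intro: "X \<in> C \<Longrightarrow> s \<in> St \<Longrightarrow> s \<in> vs X \<Longrightarrow> s \<in> vs (ap HV X)"
  using model_conds[OF _ K_C] by blast

lemma model_LH: "s \<in> St \<Longrightarrow> s \<in> vs (ap (I Lc) HV)"
  using model_conds[OF K_C K_C] by blast

lemma model_LA: "s \<in> St \<Longrightarrow> s \<in> vs (ap (I Lc) (I (At \<tau>)))"
  using model_conds[OF K_C K_C] by blast

(* the step shared by the three rules that discharge a hypothesis t1 x for a fresh x:
   at a later state s' where t1 holds of Z, the extended context holds under u(x := Z),
   so the induction hypothesis for the premise applies there *)
lemma discharge_fresh_hyp: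
  assumes IH: "\<And>s' v. s' \<in> St \<Longrightarrow> (\<And>n. v n \<in> C) \<Longrightarrow>
      (\<And>t'. t' \<in> insert (App t1 (Var x)) \<Gamma> \<Longrightarrow> s' \<in> vs (ev v t')) \<Longrightarrow> s' \<in> vs (ev v B)"
    and fresh: "x \<notin> fvs \<Gamma> \<union> fv t1" and u: "\<And>n. u n \<in> C"
    and \<Gamma>: "\<And>t'. t' \<in> \<Gamma> \<Longrightarrow> s \<in> vs (ev u t')"
    and s': "s' \<in> St" "le s s'" and Z: "Z \<in> C" and t1Z: "s' \<in> vs (ap (ev u t1) Z)"
  shows "s' \<in> vs (ev (u(x := Z)) B)"
proof (rule IH)
  show "s' \<in> St" by (rule s'(1))
  show "(u(x := Z)) n \<in> C" for n using u Z by simp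
  fix t' assume "t' \<in> insert (App t1 (Var x)) \<Gamma>"
  then show "s' \<in> vs (ev (u(x := Z)) t')"
  proof
    assume "t' = App t1 (Var x)"
    then show ?thesis using t1Z fresh ev_update_fresh[OF u Z] by simp
  next
    assume "t' \<in> \<Gamma>"
    then have "x \<notin> fv t'" using fresh by (auto simp: fvs_def)
    moreover have "s' \<in> vs (ev u t')" using \<Gamma>[OF \<open>t' \<in> \<Gamma>\<close>] up_closed ev_C u s' by blast
    ultimately show ?thesis using ev_update_fresh[OF u Z] by simp
  qed
qed

lemma sound:
  "derives om \<Gamma> t \<Longrightarrow> s \<in> St \<Longrightarrow> (\<And>n. u n \<in> C) \<Longrightarrow> (\<And>t'. t' \<in> \<Gamma> \<Longrightarrow> s \<in> vs (ev u t'))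
   \<Longrightarrow> s \<in> vs (ev u t)"
proof (induction arbitrary: s u rule: derives.induct)
  case (LH \<Gamma>)
  then show ?case using model_LH ev_HT by (simp add: LT_def)
next
  case (LA \<Gamma> \<tau>)
  then show ?case using model_LA by (simp add: LT_def)
next
  case (Eq \<Gamma> t1 t2)
  then show ?case using ev_beq by metis
next
  case (Hi \<Gamma> t)
  then show ?case using model_H_intro ev_C ev_HT by simp
next
  case (Xie \<Gamma> t1 t2 t3)
  have "s \<in> vs (ap (ap (I Xi) (ev u t1)) (ev u t2))" using Xie.IH(1)[OF Xie.prems] by (simp add: XiT_def)
  moreover have "s \<in> vs (ap (ev u t1) (ev u t3))" using Xie.IH(2)[OF Xie.prems] by simp
  ultimately show ?case using model_Xi_elim ev_C Xie.prems(1,2) by (metis eval.simps(3))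
next
  case (Xii t1 x \<Gamma> t2)
  have "s \<in> vs (ap (I Lc) (ev u t1))" using Xii.IH(2) Xii.prems by (simp add: LT_def)
  moreover have "s' \<in> vs (ap (ev u t2) Z)"
    if "s' \<in> St" "Z \<in> C" "le s s'" "s' \<in> vs (ap (ev u t1) Z)" for s' Z
  proof -
    have "s' \<in> vs (ev (u(x := Z)) (App t2 (Var x)))"
      by (rule discharge_fresh_hyp[OF Xii.IH(1)]) (use Xii.hyps(3) Xii.prems that in auto)
    then show ?thesis using ev_update_fresh Xii.hyps(3) Xii.prems that by simp
  qed
  ultimately show ?case using model_Xi_intro ev_C Xii.prems by (simp add: XiT_def)
next
  case (XiH t1 x \<Gamma> t2)
  have "s \<in> vs (ap (I Lc) (ev u t1))" using XiH.IH(2) XiH.prems by (simp add: LT_def)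
  moreover have "s' \<in> vs (ap HV (ap (ev u t2) Z))"
    if "s' \<in> St" "Z \<in> C" "le s s'" "s' \<in> vs (ap (ev u t1) Z)" for s' Z
  proof -
    have "s' \<in> vs (ev (u(x := Z)) (App HT (App t2 (Var x))))"
      by (rule discharge_fresh_hyp[OF XiH.IH(1)]) (use XiH.hyps(3) XiH.prems that in auto)
    then show ?thesis using ev_update_fresh ev_HT XiH.hyps(3) XiH.prems that by simp
  qed
  ultimately show ?case using model_XiH ev_C ev_HT XiH.prems by (simp add: XiT_def)
next
  case (FL t1 x \<Gamma> t2)
  have "s \<in> vs (ap (I Lc) (ev u t1))" using FL.IH(2) FL.prems by (simp add: LT_def)
  moreover have "s' \<in> vs (ap (I Lc) (ev u t2))"
    if "s' \<in> St" "Z \<in> C" "le s s'" "s' \<in> vs (ap (ev u t1) Z)" for s' Z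
  proof -
    have "s' \<in> vs (ev (u(x := Z)) (App LT t2))"
      by (rule discharge_fresh_hyp[OF FL.IH(1)]) (use FL.hyps(4) FL.prems that in auto)
    then show ?thesis using ev_update_fresh FL.hyps(4) FL.prems that by (simp add: LT_def)
  qed
  ultimately show ?case using model_FL FL.hyps(1) ev_C ev_FT FL.prems by (simp add: LT_def)
qed simp

end

theorem soundness:
  assumes "provable om \<Gamma> t" shows "valid_at TYPE('d) TYPE('s) om \<Gamma> t"
  unfolding valid_at_def
proof (intro allI impI ballI)
  fix St :: "'s set" and le and C :: "'d set" and ap S K I vs s u
  assume km: "kmodel om St le C ap S K I vs" and s: "s \<in> St" and u: "\<forall>n. u n \<in> C"
    and \<Gamma>: "\<forall>t'\<in>\<Gamma>. s \<in> vs (eval C ap I u t')"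
  interpret kripke_model C ap S K I om St le vs
    using km unfolding kripke_model_def comb_model_def kripke_model_axioms_def kmodel_def premodel_def
    by blast
  obtain \<Gamma>' where "\<Gamma>' \<subseteq> \<Gamma>" "derives om \<Gamma>' t" using assms unfolding provable_def by blast
  then show "s \<in> vs (eval C ap I u t)" using sound[OF _ s] u \<Gamma> by blast
qed

section \<open>Renaming and weakening of derivations\<close>

lemma fresh_var: "finite A \<Longrightarrow> \<exists>y::nat. y \<notin> A"
  using ex_new_if_finite[OF infinite_UNIV_nat] .

lemma ren_update_fresh: "x \<notin> fv t \<Longrightarrow> ren (f(x := y)) t = ren f t"
  by (rule ren_cong) auto

lemma ren_closed_combinators [simp]: "ren f HT = HT" "ren f FT = FT" "ren f LT = LT" "ren f XiT = XiT"
  by (simp_all add: closed_ren)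

(* the premise of a rule discharging the hypothesis t1 x survives a renaming f, once the
   eigenvariable x is sent to a variable y fresh for the renamed context and terms *)
lemma rename_eigenvariable:
  assumes IH: "\<And>\<Gamma>'' f'. finite \<Gamma>'' \<Longrightarrow> ren f' ` insert (App t1 (Var x)) \<Gamma> \<subseteq> \<Gamma>''
      \<Longrightarrow> derives om \<Gamma>'' (ren f' B)"
    and fresh: "x \<notin> fvs \<Gamma> \<union> fv t1" and \<Gamma>': "finite \<Gamma>'" "ren f ` \<Gamma> \<subseteq> \<Gamma>'"
  obtains y where "y \<notin> fvs \<Gamma>' \<union> fv (ren f t1) \<union> fv (ren f t2)"
    and "derives om (insert (App (ren f t1) (Var y)) \<Gamma>') (ren (f(x := y)) B)"
proof -
  obtain y where y: "y \<notin> fvs \<Gamma>' \<union> fv (ren f t1) \<union> fv (ren f t2)"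
    using fresh_var finite_fvs[OF \<Gamma>'(1)] finite_fv by (metis finite_Un)
  have "ren (f(x := y)) t = ren f t" if "t \<in> \<Gamma>" for t
    using that fresh by (intro ren_update_fresh) (auto simp: fvs_def)
  then have "ren (f(x := y)) ` insert (App t1 (Var x)) \<Gamma> \<subseteq> insert (App (ren f t1) (Var y)) \<Gamma>'"
    using fresh \<Gamma>'(2) by (auto simp: ren_update_fresh)
  with \<Gamma>'(1) have "derives om (insert (App (ren f t1) (Var y)) \<Gamma>') (ren (f(x := y)) B)"
    by (intro IH) simp_all
  with y show ?thesis by (rule that)
qed

lemma derives_ren:
  "derives om \<Gamma> t \<Longrightarrow> finite \<Gamma>' \<Longrightarrow> ren f ` \<Gamma> \<subseteq> \<Gamma>' \<Longrightarrow> derives om \<Gamma>' (ren f t)"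
proof (induction arbitrary: f \<Gamma>' rule: derives.induct)
  case (ax \<Gamma> t)
  then have "insert (ren f t) \<Gamma>' = \<Gamma>'" by auto
  then show ?case using derives.ax[OF ax.prems(1), where t="ren f t"] by simp
next
  case (LH \<Gamma>)
  then show ?case using derives.LH by simp
next
  case (LA \<Gamma> \<tau>)
  then show ?case using derives.LA by simp
next
  case (Eq \<Gamma> t1 t2)
  then show ?case using derives.Eq[OF Eq.IH[OF Eq.prems] beq_ren[OF Eq.hyps(2)]] by simp
next
  case (Hi \<Gamma> t)
  then show ?case using derives.Hi[OF Hi.IH[OF Hi.prems]] by simp
next
  case (Xie \<Gamma> t1 t2 t3)
  have "derives om \<Gamma>' (App (App XiT (ren f t1)) (ren f t2))" using Xie.IH(1)[OF Xie.prems] by simp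
  moreover have "derives om \<Gamma>' (App (ren f t1) (ren f t3))" using Xie.IH(2)[OF Xie.prems] by simp
  ultimately show ?case using derives.Xie by simp
next
  case (Xii t1 x \<Gamma> t2)
  obtain y where y: "y \<notin> fvs \<Gamma>' \<union> fv (ren f t1) \<union> fv (ren f t2)"
    and "derives om (insert (App (ren f t1) (Var y)) \<Gamma>') (ren (f(x := y)) (App t2 (Var x)))"
    using rename_eigenvariable[OF Xii.IH(1) _ Xii.prems] Xii.hyps(3) by blast
  then have "derives om (insert (App (ren f t1) (Var y)) \<Gamma>') (App (ren f t2) (Var y))"
    using Xii.hyps(3) by (simp add: ren_update_fresh)
  moreover have "derives om \<Gamma>' (App LT (ren f t1))" using Xii.IH(2)[OF Xii.prems] by simp
  ultimately show ?case using derives.Xii y by simp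
next
  case (XiH t1 x \<Gamma> t2)
  obtain y where y: "y \<notin> fvs \<Gamma>' \<union> fv (ren f t1) \<union> fv (ren f t2)"
    and "derives om (insert (App (ren f t1) (Var y)) \<Gamma>') (ren (f(x := y)) (App HT (App t2 (Var x))))"
    using rename_eigenvariable[OF XiH.IH(1) _ XiH.prems] XiH.hyps(3) by blast
  then have "derives om (insert (App (ren f t1) (Var y)) \<Gamma>') (App HT (App (ren f t2) (Var y)))"
    using XiH.hyps(3) by (simp add: ren_update_fresh)
  moreover have "derives om \<Gamma>' (App LT (ren f t1))" using XiH.IH(2)[OF XiH.prems] by simp
  ultimately show ?case using derives.XiH y by simp
next
  case (FL t1 x \<Gamma> t2)
  obtain y where y: "y \<notin> fvs \<Gamma>' \<union> fv (ren f t1) \<union> fv (ren f t2)"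
    and "derives om (insert (App (ren f t1) (Var y)) \<Gamma>') (ren (f(x := y)) (App LT t2))"
    using rename_eigenvariable[OF FL.IH(1) _ FL.prems] FL.hyps(4) by blast
  then have "derives om (insert (App (ren f t1) (Var y)) \<Gamma>') (App LT (ren f t2))"
    using FL.hyps(4) by (simp add: ren_update_fresh)
  moreover have "derives om \<Gamma>' (App LT (ren f t1))" using FL.IH(2)[OF FL.prems] by simp
  ultimately show ?case using derives.FL[OF FL.hyps(1)] y by simp
qed

lemma weaken: "derives om \<Gamma> t \<Longrightarrow> finite \<Gamma>' \<Longrightarrow> \<Gamma> \<subseteq> \<Gamma>' \<Longrightarrow> derives om \<Gamma>' t"
  using derives_ren[of om \<Gamma> t \<Gamma>' id] by (simp add: ren_id)

section \<open>Provability from arbitrary contexts\<close>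

text \<open>The rules of the calculus lifted to provable, i.e. to derivability from some
  finite subset of a possibly infinite context.  Weakening lets two finite
  subcontexts be merged.\<close>

lemma provableI: "G \<subseteq> \<Delta> \<Longrightarrow> finite G \<Longrightarrow> derives om G t \<Longrightarrow> provable om \<Delta> t"
  unfolding provable_def by blast

lemma prov_beq: "provable om \<Delta> s \<Longrightarrow> beq s t \<Longrightarrow> provable om \<Delta> t"
  unfolding provable_def by (meson derives.Eq)

lemma prov_mono: "provable om \<Delta> t \<Longrightarrow> \<Delta> \<subseteq> \<Delta>' \<Longrightarrow> provable om \<Delta>' t"
  unfolding provable_def by blast

lemma prov_ax: "t \<in> \<Delta> \<Longrightarrow> provable om \<Delta> t"
  by (rule provableI[of "{t}"]) (auto intro: derives.ax[where \<Gamma>="{}", simplified])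

lemma prov_LH: "provable om \<Delta> (App LT HT)"
  by (rule provableI[of "{}"]) (auto intro: derives.LH)

lemma prov_LA: "provable om \<Delta> (App LT (Cst (At \<tau>)))"
  by (rule provableI[of "{}"]) (auto intro: derives.LA)

lemma prov_Hi: "provable om \<Delta> t \<Longrightarrow> provable om \<Delta> (App HT t)"
  unfolding provable_def by (meson derives.Hi)

lemma prov_common_context:
  assumes "provable om \<Delta> a" "provable om (insert c \<Delta>) b"
  obtains G where "G \<subseteq> \<Delta>" "finite G" "derives om G a" "derives om (insert c G) b"
proof -
  obtain G1 where G1: "G1 \<subseteq> \<Delta>" "finite G1" "derives om G1 a"
    using assms(1) unfolding provable_def by blast
  obtain G2 where G2: "G2 \<subseteq> insert c \<Delta>" "finite G2" "derives om G2 b"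
    using assms(2) unfolding provable_def by blast
  let ?G = "G1 \<union> (G2 - {c})"
  have "derives om ?G a" by (rule weaken[OF G1(3)]) (use G1 G2 in auto)
  moreover have "derives om (insert c ?G) b" by (rule weaken[OF G2(3)]) (use G1 G2 in auto)
  ultimately show ?thesis by (rule that[rotated 2]) (use G1 G2 in auto)
qed

lemma prov_Xie:
  assumes "provable om \<Delta> (App (App XiT x) y)" "provable om \<Delta> (App x z)"
  shows "provable om \<Delta> (App y z)"
proof -
  obtain G1 where G1: "G1 \<subseteq> \<Delta>" "finite G1" "derives om G1 (App (App XiT x) y)"
    using assms(1) unfolding provable_def by blast
  obtain G2 where G2: "G2 \<subseteq> \<Delta>" "finite G2" "derives om G2 (App x z)"
    using assms(2) unfolding provable_def by blast
  have "derives om (G1 \<union> G2) (App (App XiT x) y)" by (rule weaken[OF G1(3)]) (use G1 G2 in auto)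
  moreover have "derives om (G1 \<union> G2) (App x z)" by (rule weaken[OF G2(3)]) (use G1 G2 in auto)
  ultimately have "derives om (G1 \<union> G2) (App y z)" by (rule derives.Xie)
  then show ?thesis by (rule provableI[rotated 2]) (use G1 G2 in auto)
qed

lemma prov_Xii:
  assumes "provable om \<Delta> (App LT x)" "provable om (insert (App x (Var n)) \<Delta>) (App y (Var n))"
    and "n \<notin> fvs \<Delta> \<union> fv x \<union> fv y"
  shows "provable om \<Delta> (App (App XiT x) y)"
proof -
  obtain G where G: "G \<subseteq> \<Delta>" "finite G" "derives om G (App LT x)"
    "derives om (insert (App x (Var n)) G) (App y (Var n))"
    using assms(1,2) by (rule prov_common_context)
  have "n \<notin> fvs G" using fvs_mono[OF G(1)] assms(3) by blast
  then show ?thesis using G assms(3) by (intro provableI[OF G(1,2)] derives.Xii[OF G(4,3)]) simp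
qed

lemma prov_XiH:
  assumes "provable om \<Delta> (App LT x)"
    "provable om (insert (App x (Var n)) \<Delta>) (App HT (App y (Var n)))"
    and "n \<notin> fvs \<Delta> \<union> fv x \<union> fv y"
  shows "provable om \<Delta> (App HT (App (App XiT x) y))"
proof -
  obtain G where G: "G \<subseteq> \<Delta>" "finite G" "derives om G (App LT x)"
    "derives om (insert (App x (Var n)) G) (App HT (App y (Var n)))"
    using assms(1,2) by (rule prov_common_context)
  have "n \<notin> fvs G" using fvs_mono[OF G(1)] assms(3) by blast
  then show ?thesis using G assms(3) by (intro provableI[OF G(1,2)] derives.XiH[OF G(4,3)]) simp
qed

lemma prov_FL:
  assumes om "provable om \<Delta> (App LT x)" "provable om (insert (App x (Var n)) \<Delta>) (App LT y)"
    and "n \<notin> fvs \<Delta> \<union> fv x \<union> fv y"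
  shows "provable om \<Delta> (App LT (App (App FT x) y))"
proof -
  obtain G where G: "G \<subseteq> \<Delta>" "finite G" "derives om G (App LT x)"
    "derives om (insert (App x (Var n)) G) (App LT y)"
    using assms(2,3) by (rule prov_common_context)
  have "n \<notin> fvs G" using fvs_mono[OF G(1)] assms(4) by blast
  then show ?thesis using G assms(4)
    by (intro provableI[OF G(1,2)] derives.FL[OF assms(1) G(4,3)]) simp
qed

section \<open>The term model\<close>

text \<open>Beta-eta classes of terms form an extensional combinatory algebra; the
  interpretation of a term under a valuation by classes of terms is the class of the
  correspondingly substituted term.  Classes are encoded as singletons so that they
  inhabit the carrier type fixed by the statement of the completeness theorem.\<close>

definition cls :: "('b, 'c) trm \<Rightarrow> ('b, 'c) trm set set" where "cls t = {Collect (beq t)}"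
definition TM :: "('b, 'c) trm set set set" where "TM = range cls"
definition rep :: "('b, 'c) trm set set \<Rightarrow> ('b, 'c) trm" where "rep A = (SOME t. A = cls t)"
definition tm_ap :: "('b, 'c) trm set set \<Rightarrow> ('b, 'c) trm set set \<Rightarrow> ('b, 'c) trm set set" where
  "tm_ap A B = cls (App (rep A) (rep B))"
definition ST :: "('b, 'c) trm" where
  "ST = Lam (Lam (Lam (App (App (Var 2) (Var 0)) (App (Var 1) (Var 0)))))"

lemma cls_eq: "cls s = cls t \<longleftrightarrow> beq s t"
proof
  assume "cls s = cls t"
  then have "Collect (beq s) = Collect (beq t)" by (simp add: cls_def)
  then have "t \<in> Collect (beq s)" by simp
  then show "beq s t" by simp
next
  assume h: "beq s t"
  have "Collect (beq s) = Collect (beq t)"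
    using h beq_sym beq_trans by blast
  then show "cls s = cls t" by (simp add: cls_def)
qed

lemma rep_cls: "beq (rep (cls t)) t"
proof -
  have "cls t = cls (rep (cls t))" unfolding rep_def by (rule someI[of _ t]) simp
  then show ?thesis using cls_eq beq_sym by metis
qed

lemma cls_rep: "A \<in> TM \<Longrightarrow> A = cls (rep A)"
  unfolding TM_def using rep_cls cls_eq by (metis imageE)

lemma tm_ap_cls: "tm_ap (cls s) (cls t) = cls (App s t)"
  unfolding tm_ap_def cls_eq by (intro beq_App rep_cls)

lemma cls_TM[simp]: "cls t \<in> TM" by (simp add: TM_def)

lemma K_beq: "beq (App (App KT x) y) x"
proof -
  have "beq (App (App KT x) y) (App (Lam (ren Suc x)) y)"
    unfolding KT_def by (intro beq_App beq_refl beq_beta) simp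
  also have "beq (App (Lam (ren Suc x)) y) x" by (intro beq_beta psubst_scons_shift)
  finally show ?thesis .
qed

lemma S_beq: "beq (App (App (App ST x) y) z) (App (App x z) (App y z))"
proof -
  have "beq (App (App (App ST x) y) z)
      (App (App (Lam (Lam (App (App (ren Suc (ren Suc x)) (Var 0)) (App (Var 1) (Var 0))))) y) z)"
    unfolding ST_def by (intro beq_App beq_refl beq_beta) (simp add: numeral_2_eq_2)
  also have "beq \<dots> (App (Lam (App (App (ren Suc x) (Var 0)) (App (ren Suc y) (Var 0)))) z)"
    by (intro beq_App beq_refl beq_beta) (simp add: ren_as_psubst psubst_psubst comp_def)
  also have "beq \<dots> (App (App x z) (App y z))"
    by (intro beq_beta) (simp add: psubst_scons_shift)
  finally show ?thesis .
qed

lemma comb_canon: "comb_alg (TM :: ('b, 'c) trm set set set) tm_ap (cls ST) (cls KT)"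
  unfolding comb_alg_def
proof (intro conjI ballI)
  fix X Y :: "('b, 'c) trm set set" assume X: "X \<in> TM" and Y: "Y \<in> TM"
  show "tm_ap X Y \<in> TM" by (simp add: tm_ap_def)
  obtain x y where xy: "X = cls x" "Y = cls y" using X Y by (auto simp: TM_def)
  show "tm_ap (tm_ap (cls KT) X) Y = X"
    by (simp add: xy tm_ap_cls cls_eq K_beq)
  fix Z :: "('b, 'c) trm set set" assume Z: "Z \<in> TM"
  obtain z where z: "Z = cls z" using Z by (auto simp: TM_def)
  show "tm_ap (tm_ap (tm_ap (cls ST) X) Y) Z = tm_ap (tm_ap X Z) (tm_ap Y Z)"
    by (simp add: xy z tm_ap_cls cls_eq S_beq)
qed simp_all

(* extensionality of the term model is the eta rule, applied at a fresh variable *)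
lemma ext_canon: "extensional_ca (TM :: ('b, 'c) trm set set set) tm_ap"
  unfolding extensional_ca_def
proof (intro ballI impI)
  fix M1 M2 :: "('b, 'c) trm set set" assume M1: "M1 \<in> TM" and M2: "M2 \<in> TM" and h: "\<forall>X\<in>TM. tm_ap M1 X = tm_ap M2 X"
  define m1 where "m1 = rep M1"
  define m2 where "m2 = rep M2"
  have e1: "M1 = cls m1" unfolding m1_def by (rule cls_rep[OF M1])
  have e2: "M2 = cls m2" unfolding m2_def by (rule cls_rep[OF M2])
  obtain n where n: "n \<notin> fv m1 \<union> fv m2" using fresh_var[of "fv m1 \<union> fv m2"] finite_fv by auto
  have "tm_ap M1 (cls (Var n)) = tm_ap M2 (cls (Var n))" using h by simp
  then have "beq (App m1 (Var n)) (App m2 (Var n))" by (simp add: e1 e2 tm_ap_cls cls_eq)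
  then have b: "beq (ren (\<lambda>i. if i = n then 0 else Suc i) (App m1 (Var n)))
                    (ren (\<lambda>i. if i = n then 0 else Suc i) (App m2 (Var n)))" by (rule beq_ren)
  have r: "ren (\<lambda>i. if i = n then 0 else Suc i) m = lift 0 m" if "n \<notin> fv m" for m
    unfolding lift0_as_ren by (rule ren_cong) (use that in auto)
  have "beq (App (lift 0 m1) (Var 0)) (App (lift 0 m2) (Var 0))"
    using b r[of m1] r[of m2] n by simp
  then have "beq (Lam (App (lift 0 m1) (Var 0))) (Lam (App (lift 0 m2) (Var 0)))" by (rule beq_Lam)
  moreover have "beq (Lam (App (lift 0 m1) (Var 0))) m1" by (intro beq_step beta_eta.eta)
  moreover have "beq (Lam (App (lift 0 m2) (Var 0))) m2" by (intro beq_step beta_eta.eta)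
  ultimately have "beq m1 m2" using beq_sym beq_trans by metis
  then show "M1 = M2" by (simp add: e1 e2 cls_eq)
qed

interpretation tm: comb_model TM tm_ap "cls ST" "cls KT" "\<lambda>c. cls (Cst c)"
  by unfold_locales (auto simp: comb_canon ext_canon)

lemma ev_canon:
  fixes t :: "('b, 'c) trm"
  shows "(\<And>n. u n = cls (\<sigma> n)) \<Longrightarrow> tm.ev u t = cls (psubst \<sigma> t)"
proof (induction t arbitrary: u \<sigma>)
  case (App s t)
  have "tm.ev u s = cls (psubst \<sigma> s)" by (rule App.IH(1)[OF App.prems])
  moreover have "tm.ev u t = cls (psubst \<sigma> t)" by (rule App.IH(2)[OF App.prems])
  ultimately show ?case by (simp add: tm_ap_cls)
next
  case (Lam t)
  have uC: "\<And>n. u n \<in> TM" using Lam.prems by simp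
  show ?case
  proof (rule tm.ev_Lam_eqI)
    show "cls (psubst \<sigma> (Lam t)) \<in> TM" by simp
    fix d' :: "('b, 'c) trm set set" assume d': "d' \<in> TM"
    define r where "r = rep d'"
    have dr: "d' = cls r" unfolding r_def by (rule cls_rep[OF d'])
    define \<sigma>' where "\<sigma>' = scons r \<sigma>"
    have "tm.ev (scons d' u) t = cls (psubst \<sigma>' t)"
    proof (rule Lam.IH)
      fix n show "scons d' u n = cls (\<sigma>' n)" by (cases n) (simp_all add: \<sigma>'_def dr Lam.prems)
    qed
    moreover have "psubst (scons r Var) (psubst (ups \<sigma>) t) = psubst \<sigma>' t"
      unfolding psubst_psubst
    proof (rule psubst_cong)
      fix i show "(psubst (scons r Var) \<circ> ups \<sigma>) i = \<sigma>' i"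
        by (cases i) (simp_all add: \<sigma>'_def psubst_scons_shift)
    qed
    then have "tm_ap (cls (psubst \<sigma> (Lam t))) d' = cls (psubst \<sigma>' t)"
      by (simp add: dr tm_ap_cls cls_eq beq_beta)
    ultimately show "tm_ap (cls (psubst \<sigma> (Lam t))) d' = tm.ev (scons d' u) t" by simp
  qed
qed simp_all

lemma TM_D: "X \<in> TM \<Longrightarrow> \<exists>x. X = cls x"
  unfolding TM_def by blast

lemma ev_canon_closed: "fv t = {} \<Longrightarrow> tm.ev (\<lambda>_. cls KT) t = cls t"
  using ev_canon[of "\<lambda>_. cls KT" "\<lambda>_. KT" t] by (simp add: closed_psubst)

section \<open>The canonical Kripke model\<close>

text \<open>States are contexts with infinitely many unused variables (wrapped as
  singletons), ordered by inclusion; a class holds at a context when (a representative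
  of) it is provable there.  The supply of fresh variables lets every state be extended
  by a generic hypothesis t1 n, which is what validates the three introduction
  conditions.\<close>

definition canon_St :: "('b, 'c) trm set set set" where
  "canon_St = {{\<Delta>} | \<Delta>. infinite (- fvs \<Delta>)}"

definition canon_le :: "('b, 'c) trm set set \<Rightarrow> ('b, 'c) trm set set \<Rightarrow> bool" where
  "canon_le a b \<longleftrightarrow> \<Union>a \<subseteq> \<Union>b"

definition canon_vs :: "bool \<Rightarrow> ('b, 'c) trm set set \<Rightarrow> ('b, 'c) trm set set set" where
  "canon_vs om X = {a \<in> canon_St. provable om (\<Union>a) (rep X)}"

lemma canon_St_D: "s \<in> canon_St \<Longrightarrow> \<exists>\<Delta>. s = {\<Delta>} \<and> infinite (- fvs \<Delta>)"
  unfolding canon_St_def by blast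

lemma canon_St_I: "infinite (- fvs \<Delta>) \<Longrightarrow> {\<Delta>} \<in> canon_St"
  unfolding canon_St_def by blast

lemma canon_vs_cls: "a \<in> canon_vs om (cls t) \<longleftrightarrow> a \<in> canon_St \<and> provable om (\<Union>a) t"
  using prov_beq[OF _ rep_cls] prov_beq[OF _ beq_sym[OF rep_cls]] unfolding canon_vs_def by blast

lemma canon_vs_single: "infinite (- fvs \<Delta>) \<Longrightarrow> {\<Delta>} \<in> canon_vs om (cls t) \<longleftrightarrow> provable om \<Delta> t"
  by (simp add: canon_vs_cls canon_St_I)

lemma canon_premodel:
  "premodel canon_St canon_le TM tm_ap (cls ST) (cls KT) (\<lambda>c. cls (Cst c)) (canon_vs om)"
  unfolding premodel_def
proof (intro conjI comb_canon ext_canon)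
  show "\<forall>s\<in>canon_St. \<forall>s'\<in>canon_St. canon_le s s' \<and> canon_le s' s \<longrightarrow> s = s'"
    unfolding canon_le_def by (auto dest!: canon_St_D)
  show "\<forall>X\<in>TM. canon_vs om X \<subseteq> canon_St \<and>
      (\<forall>s\<in>canon_vs om X. \<forall>s'\<in>canon_St. canon_le s s' \<longrightarrow> s' \<in> canon_vs om X)"
    unfolding canon_vs_def canon_le_def using prov_mono by blast
qed (auto simp: canon_le_def)

lemma generic_extension:
  assumes "infinite (- fvs \<Delta>)"
  obtains n where "n \<notin> fvs \<Delta> \<union> fv x \<union> fv y"
    and "{insert (App x (Var n)) \<Delta>} \<in> canon_St" "canon_le {\<Delta>} {insert (App x (Var n)) \<Delta>}"
    and "{insert (App x (Var n)) \<Delta>} \<in> canon_vs om (tm_ap (cls x) (cls (Var n)))"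
proof -
  have "infinite (- fvs \<Delta> - (fv x \<union> fv y))"
    using assms by (simp add: Diff_infinite_finite finite_fv)
  then obtain n where n: "n \<notin> fvs \<Delta> \<union> fv x \<union> fv y" using infinite_imp_nonempty by blast
  have "- fvs (insert (App x (Var n)) \<Delta>) = - fvs \<Delta> - fv (App x (Var n))" by auto
  then have "infinite (- fvs (insert (App x (Var n)) \<Delta>))"
    using assms by (simp add: Diff_infinite_finite finite_fv)
  then show ?thesis using n
    by (intro that) (auto simp: canon_St_I canon_le_def tm_ap_cls canon_vs_single intro: prov_ax)
qed

lemma canon_Xi_intro:
  assumes "X \<in> TM" "Y \<in> TM" "s \<in> canon_St" "s \<in> canon_vs om (tm_ap (cls (Cst Lc)) X)"
    and "\<forall>s'\<in>canon_St. \<forall>Z\<in>TM. canon_le s s' \<and> s' \<in> canon_vs om (tm_ap X Z)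
           \<longrightarrow> s' \<in> canon_vs om (tm_ap Y Z)"
  shows "s \<in> canon_vs om (tm_ap (tm_ap (cls (Cst Xi)) X) Y)"
proof -
  obtain x y \<Delta> where X: "X = cls x" and Y: "Y = cls y" and s: "s = {\<Delta>}" "infinite (- fvs \<Delta>)"
    using assms(1-3) TM_D canon_St_D by metis
  obtain n where n: "n \<notin> fvs \<Delta> \<union> fv x \<union> fv y"
    and ext: "{insert (App x (Var n)) \<Delta>} \<in> canon_St" "canon_le {\<Delta>} {insert (App x (Var n)) \<Delta>}"
      "{insert (App x (Var n)) \<Delta>} \<in> canon_vs om (tm_ap (cls x) (cls (Var n)))"
    using generic_extension[OF s(2)] .
  have "provable om \<Delta> (App LT x)" using assms(4) s by (simp add: X tm_ap_cls canon_vs_single LT_def)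
  moreover have "{insert (App x (Var n)) \<Delta>} \<in> canon_vs om (tm_ap Y (cls (Var n)))"
    using assms(5)[unfolded s X] ext cls_TM by blast
  then have "provable om (insert (App x (Var n)) \<Delta>) (App y (Var n))"
    by (simp add: Y tm_ap_cls canon_vs_cls)
  ultimately have "provable om \<Delta> (App (App XiT x) y)" using n by (rule prov_Xii)
  then show ?thesis using s by (simp add: X Y tm_ap_cls canon_vs_single XiT_def)
qed

lemma canon_Xi_elim:
  assumes "X \<in> TM" "Y \<in> TM" "s \<in> canon_St" "s \<in> canon_vs om (tm_ap (tm_ap (cls (Cst Xi)) X) Y)"
    and "Z \<in> TM" "s \<in> canon_vs om (tm_ap X Z)"
  shows "s \<in> canon_vs om (tm_ap Y Z)"
proof -
  obtain x y z \<Delta> where X: "X = cls x" and Y: "Y = cls y" and Z: "Z = cls z"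
    and s: "s = {\<Delta>}" "infinite (- fvs \<Delta>)"
    using assms(1-3,5) TM_D canon_St_D by metis
  have "provable om \<Delta> (App (App XiT x) y)" "provable om \<Delta> (App x z)"
    using assms(4,6) s by (simp_all add: X Y Z tm_ap_cls canon_vs_single XiT_def)
  then have "provable om \<Delta> (App y z)" by (rule prov_Xie)
  then show ?thesis using s by (simp add: Y Z tm_ap_cls canon_vs_single)
qed

lemma canon_XiH:
  assumes "X \<in> TM" "Y \<in> TM" "s \<in> canon_St" "s \<in> canon_vs om (tm_ap (cls (Cst Lc)) X)"
    and "\<forall>s'\<in>canon_St. \<forall>Z\<in>TM. canon_le s s' \<and> s' \<in> canon_vs om (tm_ap X Z)
           \<longrightarrow> s' \<in> canon_vs om (tm_ap (cls HT) (tm_ap Y Z))"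
  shows "s \<in> canon_vs om (tm_ap (cls HT) (tm_ap (tm_ap (cls (Cst Xi)) X) Y))"
proof -
  obtain x y \<Delta> where X: "X = cls x" and Y: "Y = cls y" and s: "s = {\<Delta>}" "infinite (- fvs \<Delta>)"
    using assms(1-3) TM_D canon_St_D by metis
  obtain n where n: "n \<notin> fvs \<Delta> \<union> fv x \<union> fv y"
    and ext: "{insert (App x (Var n)) \<Delta>} \<in> canon_St" "canon_le {\<Delta>} {insert (App x (Var n)) \<Delta>}"
      "{insert (App x (Var n)) \<Delta>} \<in> canon_vs om (tm_ap (cls x) (cls (Var n)))"
    using generic_extension[OF s(2)] .
  have "provable om \<Delta> (App LT x)" using assms(4) s by (simp add: X tm_ap_cls canon_vs_single LT_def)
  moreover have "{insert (App x (Var n)) \<Delta>} \<in> canon_vs om (tm_ap (cls HT) (tm_ap Y (cls (Var n))))"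
    using assms(5)[unfolded s X] ext cls_TM by blast
  then have "provable om (insert (App x (Var n)) \<Delta>) (App HT (App y (Var n)))"
    by (simp add: Y tm_ap_cls canon_vs_cls)
  ultimately have "provable om \<Delta> (App HT (App (App XiT x) y))" using n by (rule prov_XiH)
  then show ?thesis using s by (simp add: X Y tm_ap_cls canon_vs_single XiT_def)
qed

lemma canon_FL:
  assumes om "X \<in> TM" "Y \<in> TM" "s \<in> canon_St" "s \<in> canon_vs om (tm_ap (cls (Cst Lc)) X)"
    and "\<forall>s'\<in>canon_St. canon_le s s' \<and> (\<exists>Z\<in>TM. s' \<in> canon_vs om (tm_ap X Z))
           \<longrightarrow> s' \<in> canon_vs om (tm_ap (cls (Cst Lc)) Y)"
  shows "s \<in> canon_vs om (tm_ap (cls (Cst Lc)) (tm_ap (tm_ap (cls FT) X) Y))"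
proof -
  obtain x y \<Delta> where X: "X = cls x" and Y: "Y = cls y" and s: "s = {\<Delta>}" "infinite (- fvs \<Delta>)"
    using assms(2-4) TM_D canon_St_D by metis
  obtain n where n: "n \<notin> fvs \<Delta> \<union> fv x \<union> fv y"
    and ext: "{insert (App x (Var n)) \<Delta>} \<in> canon_St" "canon_le {\<Delta>} {insert (App x (Var n)) \<Delta>}"
      "{insert (App x (Var n)) \<Delta>} \<in> canon_vs om (tm_ap (cls x) (cls (Var n)))"
    using generic_extension[OF s(2)] .
  have "provable om \<Delta> (App LT x)" using assms(5) s by (simp add: X tm_ap_cls canon_vs_single LT_def)
  moreover have "{insert (App x (Var n)) \<Delta>} \<in> canon_vs om (tm_ap (cls (Cst Lc)) Y)"
    using assms(6)[unfolded s X] ext cls_TM by blast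
  then have "provable om (insert (App x (Var n)) \<Delta>) (App LT y)"
    by (simp add: Y tm_ap_cls canon_vs_cls LT_def)
  ultimately have "provable om \<Delta> (App LT (App (App FT x) y))" using assms(1) n by (intro prov_FL)
  then show ?thesis using s by (simp add: X Y tm_ap_cls canon_vs_single LT_def)
qed

lemma canon_H_intro: "X \<in> TM \<Longrightarrow> s \<in> canon_vs om X \<Longrightarrow> s \<in> canon_vs om (tm_ap (cls HT) X)"
  by (auto dest!: TM_D simp: tm_ap_cls canon_vs_cls intro: prov_Hi)

lemma canon_LH: "s \<in> canon_St \<Longrightarrow> s \<in> canon_vs om (tm_ap (cls (Cst Lc)) (cls HT))"
  using prov_LH by (simp add: tm_ap_cls canon_vs_cls LT_def)

lemma canon_LA: "s \<in> canon_St \<Longrightarrow> s \<in> canon_vs om (tm_ap (cls (Cst Lc)) (cls (Cst (At \<tau>))))"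
  using prov_LA by (simp add: tm_ap_cls canon_vs_cls LT_def)

theorem canon_kmodel:
  "kmodel om canon_St canon_le TM tm_ap (cls ST) (cls KT) (\<lambda>c. cls (Cst c)) (canon_vs om)"
  unfolding kmodel_def Let_def ev_canon_closed[OF closed_combinators(1)]
    ev_canon_closed[OF closed_combinators(2)]
  by (intro conjI canon_premodel ballI impI allI; (elim conjE)?;
      rule canon_Xi_intro canon_Xi_elim canon_XiH canon_FL canon_H_intro canon_LH canon_LA;
      assumption)

section \<open>Completeness\<close>

lemma provable_unren:
  assumes "provable om (ren g ` \<Gamma>) (ren g t)" and inv: "h \<circ> g = id"
  shows "provable om \<Gamma> t"
proof -
  have hg: "ren h (ren g r) = r" for r by (simp add: ren_ren inv ren_id)
  obtain G where G: "G \<subseteq> ren g ` \<Gamma>" "finite G" "derives om G (ren g t)"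
    using assms(1) unfolding provable_def by blast
  have der: "derives om (ren h ` G) t"
    using derives_ren[OF G(3), of "ren h ` G" h] G(2) by (simp add: hg)
  have sub: "ren h ` G \<subseteq> \<Gamma>"
  proof
    fix a assume "a \<in> ren h ` G"
    then obtain c where "c \<in> \<Gamma>" "a = ren h (ren g c)" using G(1) by blast
    then show "a \<in> \<Gamma>" by (simp add: hg)
  qed
  show ?thesis by (rule provableI[OF sub _ der]) (simp add: G(2))
qed

lemma doubling_leaves_fresh: "infinite (- fvs (ren (\<lambda>n::nat. 2 * n) ` \<Gamma>))"
proof -
  have "range (\<lambda>n::nat. 2 * n + 1) \<subseteq> - fvs (ren (\<lambda>n::nat. 2 * n) ` \<Gamma>)"
    by (auto simp: fvs_def fv_ren) presburger
  moreover have "infinite (range (\<lambda>n::nat. 2 * n + 1))"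
    using finite_imageD[of "\<lambda>n::nat. 2 * n + 1" UNIV] by (auto simp: inj_on_def)
  ultimately show ?thesis using finite_subset by blast
qed

theorem completeness:
  fixes \<Gamma> :: "('b, 'c) trm set" and t :: "('b, 'c) trm"
  assumes "valid_at TYPE(('b, 'c) trm set set) TYPE(('b, 'c) trm set set) om \<Gamma> t"
  shows "provable om \<Gamma> t"
proof -
  define \<Delta> where "\<Delta> = ren (\<lambda>n::nat. 2 * n) ` \<Gamma>"
  have \<Delta>: "infinite (- fvs \<Delta>)" unfolding \<Delta>_def by (rule doubling_leaves_fresh)
  define u :: "nat \<Rightarrow> ('b, 'c) trm set set" where "u n = cls (Var (2 * n))" for n
  have ev_u: "tm.ev u r = cls (ren (\<lambda>n. 2 * n) r)" for r :: "('b, 'c) trm"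
    unfolding ren_as_psubst by (rule ev_canon) (simp add: u_def)
  have sat: "{\<Delta>} \<in> canon_vs om (tm.ev u t')" if "t' \<in> \<Gamma>" for t'
    using that \<Delta> by (simp add: ev_u canon_vs_single prov_ax \<Delta>_def)
  have "{\<Delta>} \<in> canon_vs om (tm.ev u t)"
    by (rule assms[unfolded valid_at_def, rule_format, OF canon_kmodel canon_St_I[OF \<Delta>] _ sat])
      (simp add: u_def)
  then have "provable om \<Delta> (ren (\<lambda>n. 2 * n) t)" using \<Delta> by (simp add: ev_u canon_vs_single)
  then show ?thesis unfolding \<Delta>_def by (rule provable_unren[where h="\<lambda>n. n div 2"]) auto
qed

theorem mainTheorem5:
  fixes om :: bool and \<Gamma> :: "('b::finite, 'c) trm set" and t :: "('b, 'c) trm"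
  shows "(provable om \<Gamma> t \<longleftrightarrow>
            valid_at TYPE(('b, 'c) trm set set) TYPE(('b, 'c) trm set set) om \<Gamma> t)
       \<and> (provable om \<Gamma> t \<longrightarrow> valid_at TYPE('d) TYPE('s) om \<Gamma> t)"
proof (intro conjI iffI impI)
  show "valid_at TYPE(('b, 'c) trm set set) TYPE(('b, 'c) trm set set) om \<Gamma> t"
    if "provable om \<Gamma> t" using that by (rule soundness)
  show "provable om \<Gamma> t"
    if "valid_at TYPE(('b, 'c) trm set set) TYPE(('b, 'c) trm set set) om \<Gamma> t"
    using that by (rule completeness)
  show "valid_at TYPE('d) TYPE('s) om \<Gamma> t" if "provable om \<Gamma> t" using that by (rule soundness)
qed

end
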